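(* Suppose that a dumbbell, with holes $H$, $H'$ and path $P=x\dots x'$, is the underlying graph of some oriented graph $G$ derived from a Burling tree $(T,r,\ell,c)$. Then either $x$ is not a subordinate vertex of $H$ or $x'$ is not a subordinate vertex of $H'$.
   Context: Graphs are finite, without loops or multiple edges; oriented graphs have no pair of opposite arcs. A hole is an induced cycle of length at least $4$. A dumbbell is a graph made of a path $P=x\dots x'$ (possibly $x=x'$), a hole $H$ through $x$ and a hole $H'$ through $x'$, such that $V(H)\cap V(P)=\{x\}$, $V(H')\cap V(P)=\{x'\}$, $V(H)\cap V(H')=\{x\}\cap\{x'\}$, and there are no edges other than those of $P$, $H$ and $H'$. In a rooted tree $T$ with root $r$, each non-root vertex $v$ has a parent $p(v)$; children, leaves, ancestors and descendants are as usual. A branch is a sequence $v_1\dots v_k$ ($k\ge0$) with $v_i$ the parent of $v_{i+1}$; it starts at $v_1$. A Burling tree is a 4-tuple $(T,r,\ell,c)$: $T$ a rooted tree with root $r$; $\ell$ assigns to each non-leaf vertex $v$ one of its children $\ell(v)$ (the last-born of $v$); $c$ assigns to every vertex $v$ that is neither the root nor a last-born the vertex-set of a (possibly empty) branch starting at $\ell(p(v))$, and $c(v)=\emptyset$ if $v$ is the root or a last-born. The oriented graph fully derived from it has vertex-set $V(T)$ and an arc $uv$ iff $v\in c(u)$; an oriented graph is derived from the Burling tree if it is an induced subgraph of the fully derived one. A hole of an oriented graph means a hole of its underlying graph. If $G$ is derived from $T$ and $H$ is a hole of $G$, then (as established in the paper) $H$ with the inherited orientation has exactly two sources, called its antennas,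 and exactly two sinks; exactly one of these sinks is adjacent to both antennas and is an ancestor in $T$ of all vertices of $H$ other than the antennas: it is the pivot of $H$. A vertex of $H$ is subordinate if it is neither the pivot nor an antenna of $H$. *)

theory Defs
  imports Main
begin

text \<open>A rooted tree is given by a finite vertex set V, a root r and a parent
  function par (only meaningful on V - {r}).\<close>

definition parent_rel :: "'a set \<Rightarrow> 'a \<Rightarrow> ('a \<Rightarrow> 'a) \<Rightarrow> ('a \<times> 'a) set" where
  "parent_rel V r par = {(par v, v) | v. v \<in> V \<and> v \<noteq> r}"

definition ancestor :: "'a set \<Rightarrow> 'a \<Rightarrow> ('a \<Rightarrow> 'a) \<Rightarrow> 'a \<Rightarrow> 'a \<Rightarrow> bool" where
  "ancestor V r par a d \<longleftrightarrow> (a, d) \<in> (parent_rel V r par)\<^sup>*"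

definition children :: "'a set \<Rightarrow> 'a \<Rightarrow> ('a \<Rightarrow> 'a) \<Rightarrow> 'a \<Rightarrow> 'a set" where
  "children V r par v = {u \<in> V. u \<noteq> r \<and> par u = v}"

definition rooted_tree :: "'a set \<Rightarrow> 'a \<Rightarrow> ('a \<Rightarrow> 'a) \<Rightarrow> bool" where
  "rooted_tree V r par \<longleftrightarrow> finite V \<and> r \<in> V \<and> (\<forall>v\<in>V. v \<noteq> r \<longrightarrow> par v \<in> V)
     \<and> (\<forall>v\<in>V. ancestor V r par r v)"

definition branch_set :: "'a set \<Rightarrow> 'a \<Rightarrow> ('a \<Rightarrow> 'a) \<Rightarrow> 'a \<Rightarrow> 'a set \<Rightarrow> bool" where
  "branch_set V r par s B \<longleftrightarrow> B = {} \<or>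
     (\<exists>u\<in>V. ancestor V r par s u \<and> B = {w. ancestor V r par s w \<and> ancestor V r par w u})"

definition burling_tree ::
  "'a set \<Rightarrow> 'a \<Rightarrow> ('a \<Rightarrow> 'a) \<Rightarrow> ('a \<Rightarrow> 'a) \<Rightarrow> ('a \<Rightarrow> 'a set) \<Rightarrow> bool" where
  "burling_tree V r par lb c \<longleftrightarrow> rooted_tree V r par
     \<and> (\<forall>v\<in>V. children V r par v \<noteq> {} \<longrightarrow> lb v \<in> children V r par v)
     \<and> (\<forall>v\<in>V. (v = r \<or> v = lb (par v)) \<longrightarrow> c v = {})
     \<and> (\<forall>v\<in>V. v \<noteq> r \<and> v \<noteq> lb (par v) \<longrightarrow> branch_set V r par (lb (par v)) (c v))"

text \<open>The oriented graph derived from the Burling tree as the induced subgraph of the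
  fully derived graph on vertex set S (with S a subset of V): arc u v iff v in c u.\<close>
definition d_arc :: "'a set \<Rightarrow> ('a \<Rightarrow> 'a set) \<Rightarrow> 'a \<Rightarrow> 'a \<Rightarrow> bool" where
  "d_arc S c u v \<longleftrightarrow> u \<in> S \<and> v \<in> S \<and> v \<in> c u"

definition d_adj :: "'a set \<Rightarrow> ('a \<Rightarrow> 'a set) \<Rightarrow> 'a \<Rightarrow> 'a \<Rightarrow> bool" where
  "d_adj S c u v \<longleftrightarrow> d_arc S c u v \<or> d_arc S c v u"

text \<open>Hset is the vertex set of a hole of the derived graph; since the hole is induced,
  the neighbours of h in the hole are its neighbours in the graph lying in Hset.\<close>
definition hole_source :: "'a set \<Rightarrow> ('a \<Rightarrow> 'a set) \<Rightarrow> 'a set \<Rightarrow> 'a \<Rightarrow> bool" where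
  "hole_source S c Hset h \<longleftrightarrow> h \<in> Hset \<and> (\<forall>y\<in>Hset. d_adj S c h y \<longrightarrow> d_arc S c h y)"

definition hole_sink :: "'a set \<Rightarrow> ('a \<Rightarrow> 'a set) \<Rightarrow> 'a set \<Rightarrow> 'a \<Rightarrow> bool" where
  "hole_sink S c Hset h \<longleftrightarrow> h \<in> Hset \<and> (\<forall>y\<in>Hset. d_adj S c h y \<longrightarrow> d_arc S c y h)"

abbreviation hole_antenna :: "'a set \<Rightarrow> ('a \<Rightarrow> 'a set) \<Rightarrow> 'a set \<Rightarrow> 'a \<Rightarrow> bool" where
  "hole_antenna \<equiv> hole_source"

definition hole_pivot ::
  "'a set \<Rightarrow> 'a \<Rightarrow> ('a \<Rightarrow> 'a) \<Rightarrow> 'a set \<Rightarrow> ('a \<Rightarrow> 'a set) \<Rightarrow> 'a set \<Rightarrow> 'a \<Rightarrow> bool" where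
  "hole_pivot V r par S c Hset z \<longleftrightarrow> hole_sink S c Hset z
     \<and> (\<forall>a. hole_antenna S c Hset a \<longrightarrow> d_adj S c z a)
     \<and> (\<forall>w\<in>Hset. \<not> hole_antenna S c Hset w \<longrightarrow> ancestor V r par z w)"

definition subordinate ::
  "'a set \<Rightarrow> 'a \<Rightarrow> ('a \<Rightarrow> 'a) \<Rightarrow> 'a set \<Rightarrow> ('a \<Rightarrow> 'a set) \<Rightarrow> 'a set \<Rightarrow> 'a \<Rightarrow> bool" where
  "subordinate V r par S c Hset x \<longleftrightarrow> x \<in> Hset \<and> \<not> hole_antenna S c Hset x
     \<and> \<not> hole_pivot V r par S c Hset x"

text \<open>Cycles and paths are given as lists of distinct vertices; edges are 2-sets.\<close>
definition cycle_edges :: "'a list \<Rightarrow> 'a set set" where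
  "cycle_edges hs = {{hs ! i, hs ! ((i + 1) mod length hs)} | i. i < length hs}"

definition path_edges :: "'a list \<Rightarrow> 'a set set" where
  "path_edges ps = {{ps ! i, ps ! (i + 1)} | i. i + 1 < length ps}"

definition hole_list :: "'a list \<Rightarrow> bool" where
  "hole_list hs \<longleftrightarrow> distinct hs \<and> length hs \<ge> 4"

definition dumbbell :: "'a set \<Rightarrow> 'a set set \<Rightarrow> 'a list \<Rightarrow> 'a list \<Rightarrow> 'a list \<Rightarrow> bool" where
  "dumbbell Vd Ed hs ps hs' \<longleftrightarrow> hole_list hs \<and> hole_list hs' \<and> distinct ps \<and> ps \<noteq> []
     \<and> set hs \<inter> set ps = {hd ps} \<and> set hs' \<inter> set ps = {last ps}
     \<and> set hs \<inter> set hs' = {hd ps} \<inter> {last ps}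
     \<and> Vd = set hs \<union> set ps \<union> set hs'
     \<and> Ed = cycle_edges hs \<union> path_edges ps \<union> cycle_edges hs'"

end

(* Adjacency propagates strict ancestry in a graph derived from a Burling tree: if z is a
   strict ancestor of y and w is adjacent to y, then z is a strict ancestor of w, or else w
   sends arcs to both z and y.  Applied around a hole starting at an antenna s, this shows
   that the out-neighbour p of s higher in the tree is the pivot, a strict ancestor of every
   vertex of the hole other than p and the two antennas.  So if x and x' were subordinate,
   they would have strict ancestors z in H and z' in H'.  Since z is adjacent to nothing in
   the dumbbell outside H except possibly x, walking from x along P and around H' keeps z a
   strict ancestor, in particular of z'; symmetrically z' is a strict ancestor of z, which is
   absurd. *)

theory Submission
  imports Defs
begin

section \<open>Rooted trees\<close>

locale rooted =
  fixes V :: "'a set" and r :: 'a and par :: "'a \<Rightarrow> 'a"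
  assumes rooted_tree: "rooted_tree V r par"
begin

abbreviation anc :: "'a \<Rightarrow> 'a \<Rightarrow> bool" where
  "anc \<equiv> ancestor V r par"

definition depth :: "'a \<Rightarrow> nat" where
  "depth v = (LEAST n. (par ^^ n) v = r)"

lemma parent_rel_iff: "(a, d) \<in> parent_rel V r par \<longleftrightarrow> a = par d \<and> d \<in> V \<and> d \<noteq> r"
  by (auto simp: parent_rel_def)

lemma par_in_V: "v \<in> V \<Longrightarrow> v \<noteq> r \<Longrightarrow> par v \<in> V"
  using rooted_tree by (simp add: rooted_tree_def)

lemma anc_refl: "anc a a"
  by (simp add: ancestor_def)

lemma anc_trans: "anc a b \<Longrightarrow> anc b d \<Longrightarrow> anc a d"
  unfolding ancestor_def by (rule rtrancl_trans)

lemma anc_par: "v \<in> V \<Longrightarrow> v \<noteq> r \<Longrightarrow> anc (par v) v"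
  unfolding ancestor_def by (rule r_into_rtrancl) (simp add: parent_rel_iff)

lemma strict_anc_par: "anc a d \<Longrightarrow> a \<noteq> d \<Longrightarrow> d \<in> V \<and> d \<noteq> r \<and> anc a (par d)"
  unfolding ancestor_def by (erule rtranclE) (auto simp: parent_rel_iff)

lemma funpow_par_reaches_root:
  assumes "v \<in> V" shows "\<exists>n. (par ^^ n) v = r"
proof -
  have "(r, v) \<in> (parent_rel V r par)\<^sup>*"
    using rooted_tree assms by (simp add: rooted_tree_def ancestor_def)
  then show ?thesis
  proof (induction rule: rtrancl_induct)
    case base
    show ?case by (rule exI[of _ 0]) simp
  next
    case (step y z)
    then obtain n where "(par ^^ n) y = r" by blast
    moreover have "y = par z" using step(2) by (simp add: parent_rel_iff)
    ultimately have "(par ^^ Suc n) z = r" by (simp add: funpow_Suc_right del: funpow.simps)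
    then show ?case by blast
  qed
qed

lemma depth_par:
  assumes "v \<in> V" "v \<noteq> r" shows "depth v = Suc (depth (par v))"
proof -
  have "(par ^^ depth (par v)) (par v) = r"
    unfolding depth_def by (rule LeastI_ex) (rule funpow_par_reaches_root[OF par_in_V[OF assms]])
  then have "(par ^^ Suc (depth (par v))) v = r"
    by (simp add: funpow_Suc_right del: funpow.simps)
  then have le: "depth v \<le> Suc (depth (par v))"
    unfolding depth_def by (rule Least_le)
  have root: "(par ^^ depth v) v = r"
    unfolding depth_def by (rule LeastI_ex) (rule funpow_par_reaches_root[OF assms(1)])
  with assms(2) obtain k where k: "depth v = Suc k"
    by (cases "depth v") auto
  with root have "(par ^^ k) (par v) = r"
    by (simp add: funpow_Suc_right del: funpow.simps)
  then have "depth (par v) \<le> k"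
    unfolding depth_def by (rule Least_le)
  with le k show ?thesis by simp
qed

lemma strict_anc_depth: "anc a d \<Longrightarrow> a \<noteq> d \<Longrightarrow> a \<in> V \<and> depth a < depth d"
  unfolding ancestor_def
proof (induction rule: rtrancl_induct)
  case base
  then show ?case by simp
next
  case (step y z)
  have z: "y = par z" "z \<in> V" "z \<noteq> r" using step(2) by (auto simp: parent_rel_iff)
  then have "y \<in> V" "depth y < depth z" using par_in_V depth_par by auto
  with step(3) show ?case by fastforce
qed

lemma anc_antisym: "anc a b \<Longrightarrow> anc b a \<Longrightarrow> a = b"
  using strict_anc_depth less_asym by blast

lemma anc_linear:
  assumes "anc a d" "anc b d" shows "anc a b \<or> anc b a"
  using assms unfolding ancestor_def
proof (induction arbitrary: b rule: rtrancl_induct)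
  case base
  then show ?case by simp
next
  case (step y z)
  have y: "y = par z" "z \<in> V" "z \<noteq> r" using step(2) by (auto simp: parent_rel_iff)
  show ?case
  proof (cases "b = z")
    case True
    with step(1,2) show ?thesis by (blast intro: rtrancl_into_rtrancl)
  next
    case False
    then have "anc b y" using strict_anc_par[of b z] step.prems y(1) by (auto simp: ancestor_def)
    then show ?thesis using step.IH by (simp add: ancestor_def)
  qed
qed

end

section \<open>Burling trees\<close>

locale burling =
  fixes V :: "'a set" and r :: 'a and par lb :: "'a \<Rightarrow> 'a" and c :: "'a \<Rightarrow> 'a set"
  assumes burling_tree: "burling_tree V r par lb c"

sublocale burling \<subseteq> rooted V r par
  using burling_tree by unfold_locales (simp add: burling_tree_def)

context burling
begin

lemma last_born_sibling:
  assumes "u \<in> V" "u \<noteq> r"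
  shows "lb (par u) \<in> V \<and> lb (par u) \<noteq> r \<and> par (lb (par u)) = par u"
proof -
  have "u \<in> children V r par (par u)" using assms by (simp add: children_def)
  then have "lb (par u) \<in> children V r par (par u)"
    using burling_tree par_in_V[OF assms] unfolding burling_tree_def by blast
  then show ?thesis by (simp add: children_def)
qed

lemma last_born_no_arcs: "v \<in> V \<Longrightarrow> v = lb (par v) \<Longrightarrow> c v = {}"
  using burling_tree unfolding burling_tree_def by blast

lemma arc_branch:
  assumes "u \<in> V" "v \<in> c u"
  shows "u \<noteq> r \<and> u \<noteq> lb (par u) \<and> (\<exists>e. c u = {w. anc (lb (par u)) w \<and> anc w e})"
proof -
  have u: "u \<noteq> r \<and> u \<noteq> lb (par u)"
    using burling_tree assms unfolding burling_tree_def by auto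
  then have "branch_set V r par (lb (par u)) (c u)"
    using burling_tree assms unfolding burling_tree_def by auto
  with u assms show ?thesis unfolding branch_set_def by auto
qed

lemma arc_head_below_last_born: "u \<in> V \<Longrightarrow> v \<in> c u \<Longrightarrow> anc (lb (par u)) v"
  using arc_branch by blast

lemma arc_heads_convex:
  assumes "u \<in> V" "v \<in> c u" "anc (lb (par u)) w" "anc w v"
  shows "w \<in> c u"
proof -
  obtain e where e: "c u = {w. anc (lb (par u)) w \<and> anc w e}"
    using arc_branch[OF assms(1,2)] by blast
  with assms show ?thesis using anc_trans by blast
qed

lemma arc_heads_linear:
  assumes "u \<in> V" "v \<in> c u" "w \<in> c u"
  shows "anc v w \<or> anc w v"
proof -
  obtain e where "c u = {w. anc (lb (par u)) w \<and> anc w e}"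
    using arc_branch[OF assms(1,2)] by blast
  with assms(2,3) show ?thesis using anc_linear by auto
qed

lemma depth_last_born: "u \<in> V \<Longrightarrow> u \<noteq> r \<Longrightarrow> depth (lb (par u)) = depth u"
  using depth_par last_born_sibling by metis

lemma arc_depth:
  assumes "u \<in> V" "v \<in> c u"
  shows "depth u \<le> depth v \<and> (depth u = depth v \<longrightarrow> v = lb (par u))"
  using strict_anc_depth[OF arc_head_below_last_born[OF assms]] arc_branch[OF assms]
    depth_last_born[OF assms(1)] by fastforce

lemma arc_asym:
  assumes "u \<in> V" "v \<in> V" "v \<in> c u" "u \<in> c v"
  shows False
proof -
  have "depth u = depth v" using arc_depth assms by (meson le_antisym)
  then have v: "v = lb (par u)" using arc_depth[OF assms(1,3)] by simp
  then have "v = lb (par v)" using last_born_sibling arc_branch[OF assms(1,3)] assms(1) by metis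
  then show False using last_born_no_arcs assms(2,4) by blast
qed

text \<open>The head of an arc lies below a sibling of its tail.\<close>
lemma arc_incomparable:
  assumes "u \<in> V" "v \<in> c u"
  shows "\<not> anc u v \<and> \<not> anc v u"
proof -
  have u: "u \<noteq> r" "u \<noteq> lb (par u)" using arc_branch[OF assms] by auto
  have "depth (lb (par u)) = depth u" using depth_last_born[OF assms(1) u(1)] .
  then have "\<not> anc (lb (par u)) u \<and> \<not> anc u (lb (par u))"
    using strict_anc_depth u(2) by fastforce
  then show ?thesis
    using arc_head_below_last_born[OF assms] anc_trans anc_linear by blast
qed

lemma strict_anc_neighbour:
  assumes "y \<in> V" "w \<in> V" "anc z y" "z \<noteq> y" "w \<in> c y \<or> y \<in> c w"
  shows "(anc z w \<and> z \<noteq> w) \<or> (z \<in> c w \<and> y \<in> c w)"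
  using assms(5)
proof
  assume wy: "w \<in> c y"
  have y: "y \<noteq> r" "anc z (par y)" using strict_anc_par[OF assms(3,4)] by auto
  have "anc (par y) (lb (par y))"
    using anc_par last_born_sibling[OF assms(1) y(1)] by metis
  then have "anc z w" using y(2) arc_head_below_last_born[OF assms(1) wy] anc_trans by blast
  moreover have "z \<noteq> w" using arc_incomparable[OF assms(1) wy] assms(3) by blast
  ultimately show ?thesis by blast
next
  assume yw: "y \<in> c w"
  have w: "w \<noteq> r" using arc_branch[OF assms(2) yw] by blast
  show ?thesis
  proof (cases "anc (lb (par w)) z")
    case True
    then show ?thesis using arc_heads_convex[OF assms(2) yw True assms(3)] yw by blast
  next
    case False
    then have "anc z (lb (par w))"
      using anc_linear[OF arc_head_below_last_born[OF assms(2) yw] assms(3)] by blast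
    with False have "anc z (par w)"
      using strict_anc_par last_born_sibling[OF assms(2) w] anc_refl by metis
    then have "anc z w" using anc_par[OF assms(2) w] anc_trans by blast
    moreover have "z \<noteq> w" using arc_incomparable[OF assms(2) yw] assms(3) by blast
    ultimately show ?thesis by blast
  qed
qed

end

section \<open>Holes\<close>

text \<open>A hole of length n, enumerated n-periodically by the integers, so that rotating and
  reflecting it are just reindexings.\<close>
definition induced_cycle :: "'a set \<Rightarrow> ('a \<Rightarrow> 'a set) \<Rightarrow> int \<Rightarrow> (int \<Rightarrow> 'a) \<Rightarrow> bool" where
  "induced_cycle S c n f \<longleftrightarrow> 4 \<le> n \<and> (\<forall>i. f i \<in> S) \<and> (\<forall>i k. f i = f k \<longleftrightarrow> n dvd (i - k))
     \<and> (\<forall>i k. d_adj S c (f i) (f k) \<longleftrightarrow> f k = f (i + 1) \<or> f k = f (i - 1))"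

lemma int_not_dvd_small: "0 < \<bar>d\<bar> \<Longrightarrow> \<bar>d\<bar> < n \<Longrightarrow> \<not> n dvd (d :: int)"
  using dvd_imp_le_int[of d n] by linarith

lemma induced_cycleD:
  assumes "induced_cycle S c n f"
  shows "4 \<le> n" "f i \<in> S" "f i = f k \<longleftrightarrow> n dvd (i - k)"
    "d_adj S c (f i) (f k) \<longleftrightarrow> f k = f (i + 1) \<or> f k = f (i - 1)"
  using assms unfolding induced_cycle_def by blast+

lemma induced_cycle_reflect:
  assumes "induced_cycle S c n f" shows "induced_cycle S c n (\<lambda>i. f (- i))"
  unfolding induced_cycle_def
proof (intro conjI allI)
  fix i k :: int
  have "- i - - k = - (i - k)" "- (i + 1) = - i - 1" "- (i - 1) = - i + 1" by simp_all
  then show "f (- i) = f (- k) \<longleftrightarrow> n dvd (i - k)"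
    and "d_adj S c (f (- i)) (f (- k)) \<longleftrightarrow> f (- k) = f (- (i + 1)) \<or> f (- k) = f (- (i - 1))"
    by (simp_all only: induced_cycleD(3,4)[OF assms] dvd_minus_iff disj_commute)
qed (use induced_cycleD(1,2)[OF assms] in auto)

lemma induced_cycle_reindex:
  assumes "induced_cycle S c n f" obtains k :: nat where "int k < n" "f i = f (j - int k)"
proof
  have n: "0 < n" using induced_cycleD(1)[OF assms] by simp
  then show "int (nat ((j - i) mod n)) < n" by simp
  have "n dvd ((j - i) - (j - i) mod n)"
    by (simp add: mod_0_imp_dvd minus_mod_eq_mult_div)
  moreover have "i - (j - (j - i) mod n) = - ((j - i) - (j - i) mod n)" by simp
  ultimately have "f i = f (j - (j - i) mod n)"
    by (simp only: dvd_minus_iff induced_cycleD(3)[OF assms])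
  with n show "f i = f (j - int (nat ((j - i) mod n)))" by simp
qed

definition cyclic_nth :: "'a list \<Rightarrow> int \<Rightarrow> 'a" where
  "cyclic_nth xs i = xs ! nat (i mod int (length xs))"

lemma cyclic_nth_of_nat: "k < length xs \<Longrightarrow> cyclic_nth xs (int k) = xs ! k"
  by (simp add: cyclic_nth_def)

lemma cyclic_nth_Suc: "cyclic_nth xs (int k + 1) = xs ! ((k + 1) mod length xs)"
proof -
  have "(int k + 1) mod int (length xs) = int ((k + 1) mod length xs)"
    by (simp add: of_nat_mod add.commute)
  then show ?thesis by (simp add: cyclic_nth_def)
qed

lemma cyclic_nth_eq_iff:
  assumes "distinct xs" "xs \<noteq> []"
  shows "cyclic_nth xs i = cyclic_nth xs k \<longleftrightarrow> int (length xs) dvd (i - k)"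
proof -
  have "cyclic_nth xs i = cyclic_nth xs k \<longleftrightarrow> nat (i mod int (length xs)) = nat (k mod int (length xs))"
    unfolding cyclic_nth_def using assms by (intro nth_eq_iff_index_eq) (auto simp: nat_less_iff)
  also have "\<dots> \<longleftrightarrow> i mod int (length xs) = k mod int (length xs)"
    using assms by (simp add: eq_nat_nat_iff)
  finally show ?thesis by (simp add: mod_eq_dvd_iff)
qed

lemma range_cyclic_nth: "xs \<noteq> [] \<Longrightarrow> range (cyclic_nth xs) = set xs"
proof (intro equalityI subsetI)
  fix v assume "xs \<noteq> []" "v \<in> range (cyclic_nth xs)"
  then show "v \<in> set xs" by (auto simp: cyclic_nth_def nat_less_iff)
next
  fix v assume "v \<in> set xs"
  then obtain k where "k < length xs" "v = xs ! k" by (auto simp: in_set_conv_nth)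
  then show "v \<in> range (cyclic_nth xs)" by (metis cyclic_nth_of_nat rangeI)
qed

lemma cyclic_nth_mod: "cyclic_nth xs (i mod int (length xs)) = cyclic_nth xs i"
  by (simp add: cyclic_nth_def)

lemma cycle_edges_cyclic_nth:
  assumes "xs \<noteq> []"
  shows "cycle_edges xs = range (\<lambda>i. {cyclic_nth xs i, cyclic_nth xs (i + 1)})"
proof (intro equalityI subsetI)
  fix e assume "e \<in> cycle_edges xs"
  then obtain k where "k < length xs" "e = {xs ! k, xs ! ((k + 1) mod length xs)}"
    unfolding cycle_edges_def by blast
  then have "e = {cyclic_nth xs (int k), cyclic_nth xs (int k + 1)}"
    by (simp add: cyclic_nth_of_nat cyclic_nth_Suc)
  then show "e \<in> range (\<lambda>i. {cyclic_nth xs i, cyclic_nth xs (i + 1)})" by blast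
next
  fix e assume "e \<in> range (\<lambda>i. {cyclic_nth xs i, cyclic_nth xs (i + 1)})"
  then obtain i where e: "e = {cyclic_nth xs i, cyclic_nth xs (i + 1)}" by blast
  define k where "k = nat (i mod int (length xs))"
  have k: "k < length xs" "int k = i mod int (length xs)"
    using assms by (simp_all add: k_def nat_less_iff)
  have "cyclic_nth xs (i + 1) = cyclic_nth xs (int k + 1)"
    using cyclic_nth_mod k(2) by (metis mod_add_left_eq)
  then have "e = {xs ! k, xs ! ((k + 1) mod length xs)}"
    using e cyclic_nth_mod k by (metis cyclic_nth_of_nat cyclic_nth_Suc)
  with k(1) show "e \<in> cycle_edges xs" unfolding cycle_edges_def by blast
qed

lemma hole_list_induced_cycle:
  assumes hole: "hole_list hs" and "set hs \<subseteq> S"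
    and edges: "\<forall>u\<in>set hs. \<forall>v\<in>set hs. d_adj S c u v \<longleftrightarrow> {u, v} \<in> cycle_edges hs"
  shows "induced_cycle S c (int (length hs)) (cyclic_nth hs)"
proof -
  let ?f = "cyclic_nth hs" and ?n = "int (length hs)"
  have "distinct hs" and ne: "hs \<noteq> []" using hole unfolding hole_list_def by auto
  then have eq: "?f i = ?f k \<longleftrightarrow> ?n dvd (i - k)" for i k
    by (rule cyclic_nth_eq_iff)
  have range: "range ?f = set hs" using range_cyclic_nth[OF ne] .
  have adj: "d_adj S c (?f i) (?f k) \<longleftrightarrow> ?f k = ?f (i + 1) \<or> ?f k = ?f (i - 1)" for i k
  proof -
    have "d_adj S c (?f i) (?f k) \<longleftrightarrow> (\<exists>m. {?f i, ?f k} = {?f m, ?f (m + 1)})"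
      using edges range cycle_edges_cyclic_nth[OF ne] by blast
    also have "\<dots> \<longleftrightarrow> ?f k = ?f (i + 1) \<or> ?f k = ?f (i - 1)"
    proof
      assume "\<exists>m. {?f i, ?f k} = {?f m, ?f (m + 1)}"
      then obtain m where "(?f i = ?f m \<and> ?f k = ?f (m + 1)) \<or> (?f i = ?f (m + 1) \<and> ?f k = ?f m)"
        by (auto simp: doubleton_eq_iff)
      moreover have "i + 1 - (m + 1) = i - m" "i - 1 - m = i - (m + 1)" by simp_all
      ultimately show "?f k = ?f (i + 1) \<or> ?f k = ?f (i - 1)" by (metis eq)
    next
      assume "?f k = ?f (i + 1) \<or> ?f k = ?f (i - 1)"
      then show "\<exists>m. {?f i, ?f k} = {?f m, ?f (m + 1)}"
        by (metis add.commute diff_add_cancel insert_commute)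
    qed
    finally show ?thesis .
  qed
  show ?thesis
    unfolding induced_cycle_def using hole assms(2) range eq adj by (auto simp: hole_list_def)
qed

lemma induced_cycle_neq:
  "induced_cycle S c n f \<Longrightarrow> 0 < \<bar>i - k\<bar> \<Longrightarrow> \<bar>i - k\<bar> < n \<Longrightarrow> f i \<noteq> f k"
  using induced_cycleD(3) int_not_dvd_small by blast

lemma range_reflect: "range (\<lambda>i :: int. f (- i)) = range f"
  by (auto simp: image_iff) (metis minus_minus)

section \<open>Antennas and pivot of a hole\<close>

locale derived = burling +
  fixes S :: "'a set"
  assumes S_subset: "S \<subseteq> V"
begin

lemma d_arcD: "d_arc S c u v \<Longrightarrow> u \<in> V \<and> v \<in> V \<and> v \<in> c u"
  using S_subset unfolding d_arc_def by blast

lemma d_arc_asym: "d_arc S c u v \<Longrightarrow> \<not> d_arc S c v u"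
  using d_arcD arc_asym by blast

lemma d_adj_incomparable: "d_adj S c u v \<Longrightarrow> \<not> anc u v"
  unfolding d_adj_def using d_arcD arc_incomparable by blast

lemma strict_anc_step:
  assumes "z \<in> S" "anc z y" "z \<noteq> y" "d_adj S c y w" "\<not> d_adj S c z w"
  shows "anc z w \<and> z \<noteq> w"
proof -
  have "y \<in> V" "w \<in> V" and arc: "w \<in> c y \<or> y \<in> c w"
    using assms(4) d_arcD unfolding d_adj_def by blast+
  from strict_anc_neighbour[OF this(1,2) assms(2,3) arc] assms(1,4,5) show ?thesis
    unfolding d_adj_def d_arc_def by blast
qed

lemma strict_anc_walk:
  assumes "z \<in> S" "anc z (g 0)" "z \<noteq> g 0"
    and "\<forall>i<k. d_adj S c (g i) (g (Suc i))"
    and "\<forall>i. 0 < i \<and> i \<le> k \<longrightarrow> \<not> d_adj S c z (g i)"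
  shows "anc z (g k) \<and> z \<noteq> g k"
  using assms(4,5)
proof (induction k)
  case 0
  with assms(2,3) show ?case by simp
next
  case (Suc k)
  then have "anc z (g k) \<and> z \<noteq> g k" by simp
  moreover have "d_adj S c (g k) (g (Suc k))" "\<not> d_adj S c z (g (Suc k))"
    using Suc.prems by auto
  ultimately show ?case using strict_anc_step[OF assms(1)] by blast
qed

text \<open>A vertex m of minimal depth is a source, or else so is an in-neighbour y of m: an arc
  into y would have a tail of the same depth as y, making y a last-born without out-arcs.\<close>
lemma ex_hole_source:
  assumes "H \<subseteq> S" "H \<noteq> {}" shows "\<exists>s. hole_source S c H s"
proof -
  obtain m where m: "m \<in> H" "\<And>y. y \<in> H \<Longrightarrow> depth m \<le> depth y"
    using ex_has_least_nat[of "\<lambda>y. y \<in> H" _ depth] assms(2) by blast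
  show ?thesis
  proof (cases "hole_source S c H m")
    case False
    then obtain y where y: "y \<in> H" "d_arc S c y m"
      using m(1) unfolding hole_source_def d_adj_def by blast
    have "d_arc S c y y'" if y': "y' \<in> H" "d_arc S c y' y" for y'
    proof -
      have "depth y' \<le> depth y" "depth y \<le> depth m" "depth m \<le> depth y'"
        using arc_depth d_arcD y y' m(2) by blast+
      then have "y = lb (par y')" using arc_depth d_arcD y' by fastforce
      then have "c y = {}"
        using last_born_no_arcs last_born_sibling arc_branch d_arcD y'(2) by metis
      then show ?thesis using d_arcD y(2) by blast
    qed
    then have "hole_source S c H y" using y(1) unfolding hole_source_def d_adj_def by blast
    then show ?thesis by blast
  qed blast
qed

text \<open>s and t are the antennas of the hole H and p is its pivot.\<close>
definition pivot_triple :: "'a set \<Rightarrow> 'a \<Rightarrow> 'a \<Rightarrow> 'a \<Rightarrow> bool" where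
  "pivot_triple H s p t \<longleftrightarrow> p \<in> H \<and> t \<noteq> s \<and> hole_source S c H s \<and> hole_source S c H t
     \<and> d_arc S c s p \<and> d_arc S c t p \<and> (\<forall>v\<in>H. d_adj S c p v \<longrightarrow> v = s \<or> v = t)
     \<and> (\<forall>y\<in>H - {s, p, t}. anc p y \<and> p \<noteq> y)"

text \<open>Walking from f (j - 1) away from f (j + 1), no vertex before f (j + 2) is adjacent
  to f (j + 1).\<close>
lemma strict_anc_far_side:
  assumes cyc: "induced_cycle S c n f" and up: "anc (f (j + 1)) (f (j - 1))"
    and k: "int k \<le> n - 4"
  shows "anc (f (j + 1)) (f (j - 1 - int k)) \<and> f (j + 1) \<noteq> f (j - 1 - int k)"
proof (rule strict_anc_walk[where g = "\<lambda>k. f (j - 1 - int k)"])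
  note adj = induced_cycleD(4)[OF cyc] and neq = induced_cycle_neq[OF cyc]
  have n: "4 \<le> n" by (rule induced_cycleD(1)[OF cyc])
  show "f (j + 1) \<in> S" "anc (f (j + 1)) (f (j - 1 - int 0))"
    using induced_cycleD(2)[OF cyc] up by simp_all
  show "f (j + 1) \<noteq> f (j - 1 - int 0)" using neq[of "j + 1" "j - 1"] n by simp
  show "\<forall>i<k. d_adj S c (f (j - 1 - int i)) (f (j - 1 - int (Suc i)))"
    using adj by (simp add: algebra_simps)
  show "\<forall>i. 0 < i \<and> i \<le> k \<longrightarrow> \<not> d_adj S c (f (j + 1)) (f (j - 1 - int i))"
  proof (intro allI impI)
    fix i assume "0 < i \<and> i \<le> k"
    then have "f (j - 1 - int i) \<noteq> f (j + 1 + 1)" "f (j - 1 - int i) \<noteq> f (j + 1 - 1)"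
      using neq[of "j - 1 - int i" "j + 1 + 1"] neq[of "j - 1 - int i" "j + 1 - 1"] k by auto
    then show "\<not> d_adj S c (f (j + 1)) (f (j - 1 - int i))" using adj by blast
  qed
qed

lemma pivot_triple_oriented:
  assumes cyc: "induced_cycle S c n f" and src: "hole_source S c (range f) (f j)"
    and up: "anc (f (j + 1)) (f (j - 1))"
  shows "pivot_triple (range f) (f j) (f (j + 1)) (f (j + 2))"
proof -
  note eq = induced_cycleD(3)[OF cyc] and adj = induced_cycleD(4)[OF cyc]
    and below = strict_anc_far_side[OF cyc up]
  have n: "4 \<le> n" by (rule induced_cycleD(1)[OF cyc])
  have fS: "f i \<in> S" for i by (rule induced_cycleD(2)[OF cyc])
  let ?p = "f (j + 1)" and ?t = "f (j + 2)"
  have arc_sp: "d_arc S c (f j) ?p"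
    using src adj[of j "j + 1"] unfolding hole_source_def by blast
  have "f (j - 1 - int (nat (n - 4))) = f (j + 3)" using eq n by simp
  then have below3: "anc ?p (f (j + 3)) \<and> ?p \<noteq> f (j + 3)"
    using below[of "nat (n - 4)"] n by simp
  have "d_adj S c (f (j + 3)) ?t" using adj[of "j + 3" "j + 2"] by (simp add: add.commute)
  then have "?t \<in> c (f (j + 3)) \<or> f (j + 3) \<in> c ?t"
    unfolding d_adj_def d_arc_def by blast
  then have "anc ?p ?t \<and> ?p \<noteq> ?t \<or> ?p \<in> c ?t \<and> f (j + 3) \<in> c ?t"
    using strict_anc_neighbour below3 fS S_subset by blast
  moreover have "d_adj S c ?p ?t" using adj by (simp add: add.commute)
  ultimately have arcs_t: "d_arc S c ?t ?p" "d_arc S c ?t (f (j + 3))"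
    using d_adj_incomparable fS unfolding d_arc_def by blast+
  have "hole_source S c (range f) ?t"
    unfolding hole_source_def
  proof (intro conjI ballI impI)
    fix y assume "y \<in> range f" "d_adj S c ?t y"
    then have "y = f (j + 2 + 1) \<or> y = f (j + 2 - 1)" using adj by blast
    then show "d_arc S c ?t y" using arcs_t by (auto simp: algebra_simps)
  qed simp
  moreover have "\<forall>v\<in>range f. d_adj S c ?p v \<longrightarrow> v = f j \<or> v = ?t"
    using adj by (auto simp: algebra_simps)
  moreover have "anc ?p y \<and> ?p \<noteq> y" if y: "y \<in> range f - {f j, ?p, ?t}" for y
  proof -
    obtain i where i: "y = f i" using y by blast
    obtain k :: nat where k: "int k < n" "f i = f (j - 1 - int k)"
      by (rule induced_cycle_reindex[OF cyc])
    have "int k \<noteq> n - 1" "int k \<noteq> n - 2" "int k \<noteq> n - 3"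
      using y i k(2) eq by auto
    then show ?thesis using below[of k] k i by simp
  qed
  moreover have "?t \<noteq> f j" using induced_cycle_neq[OF cyc, of "j + 2" j] n by simp
  ultimately show ?thesis
    unfolding pivot_triple_def using src arc_sp arcs_t by blast
qed

lemma pivot_triple_of_source:
  assumes cyc: "induced_cycle S c n f" and src: "hole_source S c (range f) s"
  obtains p t where "pivot_triple (range f) s p t"
proof -
  obtain j where s: "s = f j" using src unfolding hole_source_def by blast
  have "d_arc S c s (f (j + 1))" "d_arc S c s (f (j - 1))"
    using src s induced_cycleD(4)[OF cyc, of j] unfolding hole_source_def by auto
  then have "f (j + 1) \<in> c s" "f (j - 1) \<in> c s" "s \<in> V"
    using d_arcD by blast+
  then consider "anc (f (j + 1)) (f (j - 1))" | "anc (f (j - 1)) (f (j + 1))"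
    using arc_heads_linear by blast
  then show ?thesis
  proof cases
    case 1
    then show ?thesis using pivot_triple_oriented[OF cyc] src s that by blast
  next
    case 2
    let ?g = "\<lambda>i. f (- i)"
    have "- (- j + 1) = j - 1" "- (- j - 1) = j + 1" by simp_all
    with 2 have "anc (?g (- j + 1)) (?g (- j - 1))" by (simp only:)
    moreover have "hole_source S c (range ?g) (?g (- j))" using src s range_reflect[of f] by simp
    ultimately show ?thesis
      using pivot_triple_oriented[OF induced_cycle_reflect[OF cyc]] range_reflect[of f] s that
      by fastforce
  qed
qed

text \<open>A third antenna would come with a pivot triple of its own, and the two
  pivots would be strict ancestors of each other.\<close>
lemma pivot_triple_sources:
  assumes cyc: "induced_cycle S c n f" and pt: "pivot_triple (range f) s p t"
    and w: "hole_source S c (range f) w"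
  shows "w = s \<or> w = t"
proof (rule ccontr)
  let ?H = "range f"
  assume w_new: "\<not> (w = s \<or> w = t)"
  have p: "p \<in> ?H" "hole_source S c ?H s" "hole_source S c ?H t" "d_arc S c s p"
    "\<forall>v\<in>?H. d_adj S c p v \<longrightarrow> v = s \<or> v = t" "\<forall>y\<in>?H - {s, p, t}. anc p y \<and> p \<noteq> y"
    using pt unfolding pivot_triple_def by blast+
  obtain p' t' where pt': "pivot_triple ?H w p' t'"
    using pivot_triple_of_source[OF cyc w] by blast
  have p': "p' \<in> ?H" "d_arc S c w p'" "d_arc S c t' p'"
    "\<forall>y\<in>?H - {w, p', t'}. anc p' y \<and> p' \<noteq> y"
    using pt' unfolding pivot_triple_def by blast+
  have no_source_head: False if "d_arc S c u v" "hole_source S c ?H v" "u \<in> ?H" for u v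
    using that d_arc_asym unfolding hole_source_def d_adj_def by blast
  have wH: "w \<in> ?H" and sH: "s \<in> ?H" using w p(2) unfolding hole_source_def by blast+
  have "w \<noteq> p" using no_source_head[OF p(4) _ sH] w by blast
  have "p' \<noteq> p" using p(5) p'(2) wH w_new unfolding d_adj_def by blast
  moreover have "p' \<noteq> s" "p' \<noteq> t" using no_source_head[OF p'(2) _ wH] p(2,3) by blast+
  ultimately have "anc p p'" using p(6) p'(1) by blast
  have "p \<noteq> t'" using p(5) p'(1,3) \<open>p' \<noteq> s\<close> \<open>p' \<noteq> t\<close> unfolding d_adj_def by blast
  then have "anc p' p" using p'(4) p(1) \<open>w \<noteq> p\<close> \<open>p' \<noteq> p\<close> by blast
  with \<open>anc p p'\<close> \<open>p' \<noteq> p\<close> show False using anc_antisym by blast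
qed

lemma pivot_triple_hole_pivot:
  assumes cyc: "induced_cycle S c n f" and pt: "pivot_triple (range f) s p t"
  shows "hole_pivot V r par S c (range f) p"
proof -
  have p: "p \<in> range f" "d_arc S c s p" "d_arc S c t p" "hole_source S c (range f) s"
    "hole_source S c (range f) t" "\<forall>v\<in>range f. d_adj S c p v \<longrightarrow> v = s \<or> v = t"
    "\<forall>y\<in>range f - {s, p, t}. anc p y \<and> p \<noteq> y"
    using pt unfolding pivot_triple_def by blast+
  have "hole_sink S c (range f) p" using p(1,2,3,6) unfolding hole_sink_def by blast
  moreover have "d_adj S c p a" if "hole_source S c (range f) a" for a
    using pivot_triple_sources[OF cyc pt that] p(2,3) unfolding d_adj_def by blast
  moreover have "anc p w" if "w \<in> range f" "\<not> hole_source S c (range f) w" for w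
    using that p(4,5,7) anc_refl by blast
  ultimately show ?thesis unfolding hole_pivot_def by blast
qed

lemma subordinate_strict_ancestor:
  assumes cyc: "induced_cycle S c n f" and x: "subordinate V r par S c (range f) x"
  obtains z where "z \<in> range f" "anc z x" "z \<noteq> x"
proof -
  have "range f \<subseteq> S" using induced_cycleD(2)[OF cyc] by blast
  then obtain s where "hole_source S c (range f) s" using ex_hole_source by blast
  then obtain p t where pt: "pivot_triple (range f) s p t"
    using pivot_triple_of_source[OF cyc] by blast
  then have "x \<in> range f - {s, p, t}"
    using x pivot_triple_hole_pivot[OF cyc pt] unfolding subordinate_def pivot_triple_def by blast
  then show ?thesis using pt that unfolding pivot_triple_def by blast
qed

end

section \<open>Dumbbells\<close>

lemma cycle_edges_subset: "e \<in> cycle_edges hs \<Longrightarrow> e \<subseteq> set hs"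
  unfolding cycle_edges_def by (auto intro!: nth_mem mod_less_divisor)

lemma path_edges_subset: "e \<in> path_edges ps \<Longrightarrow> e \<subseteq> set ps"
  unfolding path_edges_def by auto

lemma singleton_notin_cycle_edges:
  assumes "hole_list hs" shows "{u} \<notin> cycle_edges hs"
proof
  assume "{u} \<in> cycle_edges hs"
  then obtain i where i: "i < length hs" "hs ! i = hs ! ((i + 1) mod length hs)"
    unfolding cycle_edges_def by (auto simp: doubleton_eq_iff)
  have "distinct hs" "4 \<le> length hs" using assms unfolding hole_list_def by auto
  moreover have "(i + 1) mod length hs < length hs" using i(1) by (intro mod_less_divisor) auto
  ultimately have i_mod: "i = (i + 1) mod length hs"
    using i nth_eq_iff_index_eq[of hs i "(i + 1) mod length hs"] by blast
  then have "i + 1 = length hs" using i(1) by (cases "i + 1 < length hs") auto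
  with i_mod \<open>4 \<le> length hs\<close> show False by simp
qed

lemma singleton_notin_path_edges: "distinct ps \<Longrightarrow> {u} \<notin> path_edges ps"
  unfolding path_edges_def by (auto simp: doubleton_eq_iff nth_eq_iff_index_eq)

lemma path_edges_rev_subset: "path_edges (rev ps) \<subseteq> path_edges ps"
proof
  fix e assume "e \<in> path_edges (rev ps)"
  then obtain i where i: "i + 1 < length ps" "e = {rev ps ! i, rev ps ! (i + 1)}"
    unfolding path_edges_def by auto
  define j where "j = length ps - Suc (Suc i)"
  have j: "j + 1 < length ps" using i(1) by (simp add: j_def)
  have "e = {ps ! j, ps ! (j + 1)}"
    using i by (auto simp: rev_nth j_def Suc_diff_Suc)
  moreover have "{ps ! j, ps ! (j + 1)} \<in> path_edges ps"
    using j unfolding path_edges_def by blast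
  ultimately show "e \<in> path_edges ps" by simp
qed

lemma path_edges_rev: "path_edges (rev ps) = path_edges ps"
  using path_edges_rev_subset[of ps] path_edges_rev_subset[of "rev ps"] by simp

lemma dumbbellD:
  assumes "dumbbell Vd Ed hs ps hs'"
  shows "hole_list hs" "hole_list hs'" "distinct ps" "ps \<noteq> []"
    "set hs \<inter> set ps = {hd ps}" "set hs' \<inter> set ps = {last ps}"
    "set hs \<inter> set hs' = {hd ps} \<inter> {last ps}" "Vd = set hs \<union> set ps \<union> set hs'"
    "Ed = cycle_edges hs \<union> path_edges ps \<union> cycle_edges hs'"
  using assms unfolding dumbbell_def by blast+

lemma dumbbell_rev: "dumbbell Vd Ed hs ps hs' \<Longrightarrow> dumbbell Vd Ed hs' (rev ps) hs"
  unfolding dumbbell_def by (auto simp: hd_rev last_rev path_edges_rev)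

lemma dumbbell_hole_edges:
  assumes db: "dumbbell Vd Ed hs ps hs'" and u: "u \<in> set hs" and v: "v \<in> set hs"
  shows "{u, v} \<in> Ed \<longleftrightarrow> {u, v} \<in> cycle_edges hs"
proof -
  note D = dumbbellD[OF db]
  have "{u, v} \<notin> path_edges ps"
  proof
    assume e: "{u, v} \<in> path_edges ps"
    then have "u = hd ps" "v = hd ps" using path_edges_subset D(5) u v by blast+
    with e show False using singleton_notin_path_edges[OF D(3)] by simp
  qed
  moreover have "{u, v} \<notin> cycle_edges hs'"
  proof
    assume e: "{u, v} \<in> cycle_edges hs'"
    then have "u = hd ps" "v = hd ps" using cycle_edges_subset D(7) u v by blast+
    with e show False using singleton_notin_cycle_edges[OF D(2)] by simp
  qed
  ultimately show ?thesis using D(9) by blast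
qed

lemma dumbbell_hole_neighbour:
  assumes db: "dumbbell Vd Ed hs ps hs'" and z: "z \<in> set hs" "z \<noteq> hd ps" and e: "{z, w} \<in> Ed"
  shows "w \<in> set hs"
proof -
  note D = dumbbellD[OF db]
  have "z \<notin> set ps" "z \<notin> set hs'" using z D(5,7) by blast+
  then have "{z, w} \<notin> path_edges ps \<union> cycle_edges hs'"
    using path_edges_subset cycle_edges_subset by blast
  then have "{z, w} \<in> cycle_edges hs" using e D(9) by blast
  then show ?thesis using cycle_edges_subset by blast
qed

context derived
begin

lemma dumbbell_induced_cycle:
  assumes db: "dumbbell S Ed hs ps hs'"
    and edges: "\<forall>u\<in>S. \<forall>v\<in>S. d_adj S c u v \<longleftrightarrow> {u, v} \<in> Ed"
  shows "induced_cycle S c (int (length hs)) (cyclic_nth hs)"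
proof (rule hole_list_induced_cycle)
  show "hole_list hs" "set hs \<subseteq> S" using dumbbellD(1,8)[OF db] by auto
  then show "\<forall>u\<in>set hs. \<forall>v\<in>set hs. d_adj S c u v \<longleftrightarrow> {u, v} \<in> cycle_edges hs"
    using edges dumbbell_hole_edges[OF db] by blast
qed

lemma dumbbell_far_nonadjacent:
  assumes db: "dumbbell S Ed hs ps hs'"
    and edges: "\<forall>u\<in>S. \<forall>v\<in>S. d_adj S c u v \<longleftrightarrow> {u, v} \<in> Ed"
    and z: "z \<in> set hs" "z \<noteq> hd ps" and w: "w \<in> set ps \<union> set hs'" "w \<noteq> hd ps"
  shows "\<not> d_adj S c z w"
proof
  assume "d_adj S c z w"
  then have "{z, w} \<in> Ed" using edges unfolding d_adj_def d_arc_def by blast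
  then have "w \<in> set hs" using dumbbell_hole_neighbour[OF db z] by blast
  with w dumbbellD(5,7)[OF db] show False by blast
qed

lemma dumbbell_strict_anc_last:
  assumes db: "dumbbell S Ed hs ps hs'"
    and edges: "\<forall>u\<in>S. \<forall>v\<in>S. d_adj S c u v \<longleftrightarrow> {u, v} \<in> Ed"
    and z: "z \<in> set hs" "z \<noteq> hd ps" "anc z (hd ps)"
  shows "anc z (last ps) \<and> z \<noteq> last ps"
proof -
  note D = dumbbellD[OF db]
  have "anc z (ps ! (length ps - 1)) \<and> z \<noteq> ps ! (length ps - 1)"
  proof (rule strict_anc_walk)
    show "z \<in> S" using z(1) D(8) by blast
    show "anc z (ps ! 0)" "z \<noteq> ps ! 0" using z D(4) by (simp_all add: hd_conv_nth)
    show "\<forall>i<length ps - 1. d_adj S c (ps ! i) (ps ! Suc i)"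
    proof (intro allI impI)
      fix i assume "i < length ps - 1"
      then have "{ps ! i, ps ! Suc i} \<in> path_edges ps" "ps ! i \<in> S" "ps ! Suc i \<in> S"
        unfolding path_edges_def using D(8) by auto
      then show "d_adj S c (ps ! i) (ps ! Suc i)" using edges D(9) by blast
    qed
    show "\<forall>i. 0 < i \<and> i \<le> length ps - 1 \<longrightarrow> \<not> d_adj S c z (ps ! i)"
      using dumbbell_far_nonadjacent[OF db edges z(1,2)] D(3,4)
      by (auto simp: hd_conv_nth nth_eq_iff_index_eq)
  qed
  then show ?thesis using D(4) by (simp add: last_conv_nth)
qed

lemma dumbbell_strict_descendants:
  assumes db: "dumbbell S Ed hs ps hs'"
    and edges: "\<forall>u\<in>S. \<forall>v\<in>S. d_adj S c u v \<longleftrightarrow> {u, v} \<in> Ed"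
    and z: "z \<in> set hs" "z \<noteq> hd ps" "anc z (hd ps)" and v: "v \<in> set hs'"
  shows "anc z v \<and> z \<noteq> v"
proof -
  note D = dumbbellD[OF db]
  let ?f = "cyclic_nth hs'" and ?n = "int (length hs')"
  have cyc: "induced_cycle S c ?n ?f"
    using dumbbell_induced_cycle[OF dumbbell_rev[OF db] edges] .
  have "hs' \<noteq> []" using D(2) unfolding hole_list_def by auto
  then have range: "range ?f = set hs'" by (rule range_cyclic_nth)
  obtain j where j: "last ps = ?f j" using D(6) range by blast
  obtain i where "v = ?f i" using v range by blast
  then obtain k :: nat where k: "int k < ?n" "v = ?f (j - int k)"
    using induced_cycle_reindex[OF cyc] by metis
  have "anc z (?f (j - int k)) \<and> z \<noteq> ?f (j - int k)"
  proof (rule strict_anc_walk[where g = "\<lambda>k. ?f (j - int k)"])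
    show "z \<in> S" using z(1) D(8) by blast
    show "anc z (?f (j - int 0))" "z \<noteq> ?f (j - int 0)"
      using dumbbell_strict_anc_last[OF db edges z] j by simp_all
    show "\<forall>i<k. d_adj S c (?f (j - int i)) (?f (j - int (Suc i)))"
      using induced_cycleD(4)[OF cyc] by (simp add: algebra_simps)
    show "\<forall>i. 0 < i \<and> i \<le> k \<longrightarrow> \<not> d_adj S c z (?f (j - int i))"
    proof (intro allI impI)
      fix i assume "0 < i \<and> i \<le> k"
      then have "?f (j - int i) \<noteq> last ps"
        using induced_cycle_neq[OF cyc, of "j - int i" j] k(1) j by simp
      moreover have "?f (j - int i) \<in> set hs'" using range by blast
      ultimately show "\<not> d_adj S c z (?f (j - int i))"
        using dumbbell_far_nonadjacent[OF db edges z(1,2)] D(5,7) by blast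
    qed
  qed
  with k show ?thesis by simp
qed

lemma dumbbell_subordinate_strict_ancestor:
  assumes db: "dumbbell S Ed hs ps hs'"
    and edges: "\<forall>u\<in>S. \<forall>v\<in>S. d_adj S c u v \<longleftrightarrow> {u, v} \<in> Ed"
    and x: "subordinate V r par S c (set hs) x"
  obtains z where "z \<in> set hs" "anc z x" "z \<noteq> x"
proof -
  have "hs \<noteq> []" using dumbbellD(1)[OF db] unfolding hole_list_def by auto
  then have range: "range (cyclic_nth hs) = set hs" by (rule range_cyclic_nth)
  with x have "subordinate V r par S c (range (cyclic_nth hs)) x" by simp
  then obtain z where "z \<in> range (cyclic_nth hs)" "anc z x" "z \<noteq> x"
    by (rule subordinate_strict_ancestor[OF dumbbell_induced_cycle[OF db edges]])
  with range show ?thesis using that by blast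
qed

end

theorem lemma6p2:
  fixes V :: "'a set" and r :: 'a and par lb :: "'a \<Rightarrow> 'a" and c :: "'a \<Rightarrow> 'a set"
    and S Vd :: "'a set" and Ed :: "'a set set" and hs ps hs' :: "'a list" and x x' :: 'a
  assumes "burling_tree V r par lb c"
    and "S \<subseteq> V"
    and "dumbbell Vd Ed hs ps hs'"
    and "hd ps = x" and "last ps = x'"
    and "S = Vd"
    and "\<forall>u\<in>S. \<forall>v\<in>S. d_adj S c u v \<longleftrightarrow> {u, v} \<in> Ed"
  shows "\<not> subordinate V r par S c (set hs) x \<or> \<not> subordinate V r par S c (set hs') x'"
proof (rule ccontr)
  interpret derived V r par lb c S
    using assms(1,2) by unfold_locales
  have db: "dumbbell S Ed hs ps hs'" using assms(3,6) by simp
  note db' = dumbbell_rev[OF db] and edges = assms(7)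
  assume "\<not> ?thesis"
  then have "subordinate V r par S c (set hs) x" "subordinate V r par S c (set hs') x'"
    by simp_all
  then obtain z z' where z: "z \<in> set hs" "anc z x" "z \<noteq> x"
    and z': "z' \<in> set hs'" "anc z' x'" "z' \<noteq> x'"
    by (elim dumbbell_subordinate_strict_ancestor[OF db edges]
        dumbbell_subordinate_strict_ancestor[OF db' edges])
  have "anc z z' \<and> z \<noteq> z'"
    using dumbbell_strict_descendants[OF db edges z(1) _ _ z'(1)] z assms(4) by simp
  moreover have "anc z' z"
    using dumbbell_strict_descendants[OF db' edges z'(1) _ _ z(1)] z' assms(5)
      dumbbellD(4)[OF db] by (simp add: hd_rev)
  ultimately show False using anc_antisym by blast
qed

end
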